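(* For every $n$, let $C_n\subseteq\mathcal C(G'')$ be a discrete (multi-)set of pointed perturbed diamonds with parameter $n$ (i.e. elements of the form $(D_n(x''),x'')$). Assume that for every $T<\infty$, $\lim_n |C_n\cap A_{n,T}|=0$. Then every subsequential limit of $(C_n)_n$ in $\mathcal C(G'')$ consists only of perturbed pointed horoballs of type II (possibly with infinite delay).
   Context: $G,G'$ are finitely generated groups with neutral elements $o,o'$, word metrics $d,d'$ from Cayley graphs with respect to finite generating sets, ball volumes $v_n,v'_n$, growth rates $a=\lim v_n^{1/n}>1$, $a'=\lim (v'_n)^{1/n}>1$, and $c:=\log a/\log a'$. $G''=G\times G'$ has origin $o''=(o,o')$ and metric $\rho_c((x,x'),(y,y'))=d(x,y)+d'(x',y')/c$. Fix a non-decreasing $f:\mathbb Z_{\ge0}\to\mathbb Z_{\ge0}$ and a strictly increasing sequence $(r_j)$ in $\mathbb Z_{\ge0}$ with $f(0)=0$, $r'_j:=f(r_j)$, $0<\inf_n v'_{r'_n}/v_{r_n}\le \sup_n v'_{r'_n}/v_{r_n}<\infty$ and $\forall m\,\exists N\,\forall n\ge N:|f(n+m)-f(n)-cm|\le1$. Perturbed diamond: $D_n(x''):=\bigcup_{t=0}^{r_n}\{(y,y'):d(x,y)=r_n-t,\ d'(x',y')\le f(t)\}$ for $x''=(x,x')$. Horocompactification $\overline{G''}$ of $(G'',\rho_c)$: with $\rho_{x''}(y'')=\rho_c(x'',y'')-\rho_c(x'',o'')$, the closure of $\{\rho_{x''}\}$ among $1$-Lipschitz functions vanishing at $o''$ under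 pointwise convergence; similarly $\overline G,\overline{G'}$ and boundaries $\partial G=\overline G\setminus G$, $\partial G'$. For $\theta\in\partial G$, $\theta'\in\partial G'$, $(\theta,\theta')\in\partial G''$ is the function $(y,y')\mapsto d_\theta(y)+d_{\theta'}(y')/c$. $\mathcal C(G'')$ is the space of pairs $(B,\theta)$ with $B\subseteq G''$ nonempty and $\theta\in\overline{G''}$, with the product of the Fell topology (pointwise convergence of indicators) and the topology of $\overline{G''}$; a discrete set in $\mathcal C(G'')$ is a multiset such that each $y''\in G''$ lies in $B$ for only finitely many of its elements $(B,\theta)$, and convergence of discrete sets is vague convergence of the associated counting measures. A pointed perturbed diamond is $(D_n(x''),x'')$. $A_{n,T}$ is the set of pointed perturbed diamonds with parameter $n$ whose center $(x,x')$ satisfies either ($d(o,x)<r_n+T$ and $d'(o',x')<T$) or ($d'(o',x')<r'_n+T$ and $d(o,x)<T$). A perturbed pointed horoball of type II is a pointed set $(B,\theta'')$ which is a limit in $\mathcal C(G'')$ of pointed perturbed diamonds $(D_{n_k}(x''_k),x''_k)$ (along parameters $n_k\to\infty$) with centers $x''_k=(x_k,x'_k)$ satisfying $d(x_k,o)\to\infty$ and $d'(x'_k,o')\to\infty$ (then $\theta''\in\partial G\times\partial G'$); additionally $(G'',\theta'')$ for any $\theta''\in\partial G\times\partial G'$ counts as a perturbed pointed horoball of type II with infinite delay. *)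

theory Defs
  imports "HOL-Analysis.Analysis"
begin

text \<open>Groups are types of class group_add (written additively, not necessarily
commutative); the neutral element o is 0.  S is a finite generating set.\<close>

definition fin_gen :: "'a::group_add set \<Rightarrow> bool" where
  "fin_gen S \<longleftrightarrow> finite S \<and>
     (\<forall>x. \<exists>ws. set ws \<subseteq> S \<union> uminus ` S \<and> sum_list ws = x)"

definition word_len :: "'a::group_add set \<Rightarrow> 'a \<Rightarrow> nat" where
  "word_len S x = (LEAST n. \<exists>ws. length ws = n \<and> set ws \<subseteq> S \<union> uminus ` S \<and> sum_list ws = x)"

definition wdist :: "'a::group_add set \<Rightarrow> 'a \<Rightarrow> 'a \<Rightarrow> nat" where
  "wdist S x y = word_len S (- x + y)"

definition ball_vol :: "'a::group_add set \<Rightarrow> nat \<Rightarrow> nat" where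
  "ball_vol S n = card {y. wdist S 0 y \<le> n}"

definition growth :: "'a::group_add set \<Rightarrow> real" where
  "growth S = lim (\<lambda>n. root n (real (ball_vol S n)))"

definition horoG :: "'a::group_add set \<Rightarrow> 'a \<Rightarrow> ('a \<Rightarrow> real)" where
  "horoG S x = (\<lambda>y. real (wdist S x y) - real (wdist S x 0))"

definition boundaryG :: "'a::group_add set \<Rightarrow> ('a \<Rightarrow> real) set" where
  "boundaryG S = closure (range (horoG S)) - range (horoG S)"

definition rho :: "'a::group_add set \<Rightarrow> 'b::group_add set \<Rightarrow> real \<Rightarrow> 'a \<times> 'b \<Rightarrow> 'a \<times> 'b \<Rightarrow> real" where
  "rho S S' c p q = real (wdist S (fst p) (fst q)) + real (wdist S' (snd p) (snd q)) / c"

definition horo :: "'a::group_add set \<Rightarrow> 'b::group_add set \<Rightarrow> real \<Rightarrow> 'a \<times> 'b \<Rightarrow> ('a \<times> 'b \<Rightarrow> real)" where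
  "horo S S' c x = (\<lambda>y. rho S S' c x y - rho S S' c x 0)"

text \<open>Horocompactification of (G'', rho_c): closure (pointwise convergence) of the
horofunctions; points of G'' are identified with their horofunctions.\<close>
definition horo_closure :: "'a::group_add set \<Rightarrow> 'b::group_add set \<Rightarrow> real \<Rightarrow> ('a \<times> 'b \<Rightarrow> real) set" where
  "horo_closure S S' c = closure (range (horo S S' c))"

definition prod_boundary :: "'a::group_add set \<Rightarrow> 'b::group_add set \<Rightarrow> real \<Rightarrow> ('a \<times> 'b \<Rightarrow> real) set" where
  "prod_boundary S S' c =
     {(\<lambda>(y, y'). \<theta> y + \<theta>' y' / c) | \<theta> \<theta>'. \<theta> \<in> boundaryG S \<and> \<theta>' \<in> boundaryG S'}"

text \<open>A point (B, theta) is represented as (indicator of B as a bool-valued function, theta);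
the product topology on functions into bool gives the Fell topology.\<close>
type_synonym ('a, 'b) cpt = "(('a \<times> 'b) \<Rightarrow> bool) \<times> (('a \<times> 'b) \<Rightarrow> real)"

definition cspace :: "'a::group_add set \<Rightarrow> 'b::group_add set \<Rightarrow> real \<Rightarrow> ('a, 'b) cpt set" where
  "cspace S S' c = {(b, \<theta>). (\<exists>y. b y) \<and> \<theta> \<in> horo_closure S S' c}"

text \<open>A discrete (multi)set: multiplicity function, supported in X, locally finite.\<close>
definition discrete_set :: "('a, 'b) cpt set \<Rightarrow> (('a, 'b) cpt \<Rightarrow> nat) \<Rightarrow> bool" where
  "discrete_set X m \<longleftrightarrow> (\<forall>p. m p \<noteq> 0 \<longrightarrow> p \<in> X) \<and> (\<forall>y. finite {p. m p \<noteq> 0 \<and> fst p y})"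

definition Cc :: "('c::topological_space) set \<Rightarrow> ('c \<Rightarrow> real) set" where
  "Cc X = {\<phi>. continuous_on X \<phi> \<and> (\<exists>K. compact K \<and> K \<subseteq> X \<and> (\<forall>p\<in>X - K. \<phi> p = 0))}"

definition mint :: "('c \<Rightarrow> nat) \<Rightarrow> ('c \<Rightarrow> real) \<Rightarrow> real" where
  "mint m \<phi> = (\<Sum>p | m p \<noteq> 0 \<and> \<phi> p \<noteq> 0. real (m p) * \<phi> p)"

definition vague_conv :: "('c::topological_space) set \<Rightarrow> (nat \<Rightarrow> 'c \<Rightarrow> nat) \<Rightarrow> ('c \<Rightarrow> nat) \<Rightarrow> bool" where
  "vague_conv X ms m \<longleftrightarrow> (\<forall>\<phi>\<in>Cc X. (\<lambda>n. mint (ms n) \<phi>) \<longlonglongrightarrow> mint m \<phi>)"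

definition diamond :: "'a::group_add set \<Rightarrow> 'b::group_add set \<Rightarrow> (nat \<Rightarrow> nat) \<Rightarrow> (nat \<Rightarrow> nat)
    \<Rightarrow> nat \<Rightarrow> 'a \<times> 'b \<Rightarrow> ('a \<times> 'b) set" where
  "diamond S S' f r n x = (\<Union>t\<in>{0..r n}.
     {(y, y'). wdist S (fst x) y = r n - t \<and> wdist S' (snd x) y' \<le> f t})"

definition pdiamond :: "'a::group_add set \<Rightarrow> 'b::group_add set \<Rightarrow> real \<Rightarrow> (nat \<Rightarrow> nat) \<Rightarrow> (nat \<Rightarrow> nat)
    \<Rightarrow> nat \<Rightarrow> 'a \<times> 'b \<Rightarrow> ('a, 'b) cpt" where
  "pdiamond S S' c f r n x = ((\<lambda>y. y \<in> diamond S S' f r n x), horo S S' c x)"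

definition A_set :: "'a::group_add set \<Rightarrow> 'b::group_add set \<Rightarrow> real \<Rightarrow> (nat \<Rightarrow> nat) \<Rightarrow> (nat \<Rightarrow> nat)
    \<Rightarrow> nat \<Rightarrow> real \<Rightarrow> ('a, 'b) cpt set" where
  "A_set S S' c f r n T = pdiamond S S' c f r n `
     {x. (real (wdist S 0 (fst x)) < real (r n) + T \<and> real (wdist S' 0 (snd x)) < T) \<or>
         (real (wdist S' 0 (snd x)) < real (f (r n)) + T \<and> real (wdist S 0 (fst x)) < T)}"

definition typeII_horoball :: "'a::group_add set \<Rightarrow> 'b::group_add set \<Rightarrow> real \<Rightarrow> (nat \<Rightarrow> nat) \<Rightarrow> (nat \<Rightarrow> nat)
    \<Rightarrow> ('a, 'b) cpt \<Rightarrow> bool" where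
  "typeII_horoball S S' c f r p \<longleftrightarrow>
     (p \<in> cspace S S' c \<and>
      (\<exists>nk xk. filterlim nk at_top sequentially \<and>
        filterlim (\<lambda>k. real (wdist S (fst (xk k)) 0)) at_top sequentially \<and>
        filterlim (\<lambda>k. real (wdist S' (snd (xk k)) 0)) at_top sequentially \<and>
        (\<lambda>k. pdiamond S S' c f r (nk k) (xk k)) \<longlonglongrightarrow> p))
   \<or> (fst p = (\<lambda>_. True) \<and> snd p \<in> prod_boundary S S' c)"

end

theory Submission
  imports Defs
begin

text \<open>Let \<open>p\<close> be charged by a subsequential vague limit of the \<open>C\<^sub>n\<close>. Testing against
continuous compactly supported bumps that pin down both components of \<open>p\<close> on larger and
larger finite windows shows that, along a diagonal subsequence, the \<open>C\<^sub>n\<close> contain pointed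
diamonds converging to \<open>p\<close>. Since \<open>C\<^sub>n\<close> eventually vanishes on \<open>A\<^sub>n\<^sub>,\<^sub>T\<close> for each fixed \<open>T\<close>,
the \<open>k\<close>-th of these diamonds can be taken outside \<open>A\<^sub>n\<^sub>,\<^sub>k\<^sub>+\<^sub>R\<close>; as it eventually also
contains a fixed point of the set component of \<open>p\<close>, both coordinates of its centre are then
at distance at least \<open>k\<close> from the origin.\<close>

lemma word_len_witness:
  assumes "fin_gen S"
  shows "\<exists>ws. length ws = word_len S x \<and> set ws \<subseteq> S \<union> uminus ` S \<and> sum_list ws = x"
proof -
  from assms obtain ws where "set ws \<subseteq> S \<union> uminus ` S \<and> sum_list ws = x"
    unfolding fin_gen_def by blast
  then have "\<exists>n ws. length ws = n \<and> set ws \<subseteq> S \<union> uminus ` S \<and> sum_list ws = x" by blast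
  then show ?thesis unfolding word_len_def by (rule LeastI_ex)
qed

lemma word_len_le_length:
  assumes "set ws \<subseteq> S \<union> uminus ` S" "sum_list ws = x"
  shows "word_len S x \<le> length ws"
  unfolding word_len_def using assms by (intro Least_le) blast

lemma sum_list_rev_map_uminus: "sum_list (rev (map uminus ws)) = - sum_list (ws :: 'a::group_add list)"
  by (induction ws) (auto simp: minus_add)

lemma word_len_add:
  assumes "fin_gen S"
  shows "word_len S (a + b) \<le> word_len S a + word_len S b"
proof -
  obtain wa where a: "length wa = word_len S a" "set wa \<subseteq> S \<union> uminus ` S" "sum_list wa = a"
    using word_len_witness[OF assms] by blast
  obtain wb where b: "length wb = word_len S b" "set wb \<subseteq> S \<union> uminus ` S" "sum_list wb = b"
    using word_len_witness[OF assms] by blast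
  have "word_len S (a + b) \<le> length (wa @ wb)"
    by (rule word_len_le_length) (use a b in auto)
  then show ?thesis using a b by simp
qed

lemma word_len_uminus_le:
  assumes "fin_gen S"
  shows "word_len S (- a) \<le> word_len S a"
proof -
  obtain wa where a: "length wa = word_len S a" "set wa \<subseteq> S \<union> uminus ` S" "sum_list wa = a"
    using word_len_witness[OF assms] by blast
  have "word_len S (- a) \<le> length (rev (map uminus wa))"
    by (rule word_len_le_length) (use a sum_list_rev_map_uminus[of wa] in auto)
  then show ?thesis using a by simp
qed

lemma word_len_uminus: "fin_gen S \<Longrightarrow> word_len S (- a) = word_len S a"
  using word_len_uminus_le[of S a] word_len_uminus_le[of S "- a"] by simp

lemma wdist_commute: "fin_gen S \<Longrightarrow> wdist S x y = wdist S y x"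
  unfolding wdist_def by (metis word_len_uminus minus_add minus_minus)

lemma wdist_triangle: "fin_gen S \<Longrightarrow> wdist S x z \<le> wdist S x y + wdist S y z"
  unfolding wdist_def using word_len_add[of S "- x + y" "- y + z"] by (simp add: add.assoc)

lemma finite_wdist_ball:
  assumes "fin_gen S"
  shows "finite {y. wdist S 0 y \<le> n}"
proof -
  let ?W = "{ws. set ws \<subseteq> S \<union> uminus ` S \<and> length ws \<le> n}"
  have "finite (S \<union> uminus ` S)" using assms unfolding fin_gen_def by auto
  then have "finite ?W" by (rule finite_lists_length_le)
  moreover have "{y. wdist S 0 y \<le> n} \<subseteq> sum_list ` ?W"
  proof
    fix y assume "y \<in> {y. wdist S 0 y \<le> n}"
    with word_len_witness[OF assms, of y] show "y \<in> sum_list ` ?W"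
      unfolding wdist_def by force
  qed
  ultimately show ?thesis using finite_surj by blast
qed

lemma finite_wdist_ball_prod:
  "fin_gen S \<Longrightarrow> fin_gen S' \<Longrightarrow> finite ({y. wdist S 0 y \<le> k} \<times> {y'. wdist S' 0 y' \<le> k})"
  by (intro finite_cartesian_product finite_wdist_ball)

lemma eventually_in_wdist_ball_prod:
  "\<forall>\<^sub>F k in sequentially. y \<in> {z. wdist S 0 z \<le> k} \<times> {z'. wdist S' 0 z' \<le> k}"
proof -
  have "\<forall>k\<ge>max (wdist S 0 (fst y)) (wdist S' 0 (snd y)). y \<in> {z. wdist S 0 z \<le> k} \<times> {z'. wdist S' 0 z' \<le> k}"
    by (cases y) auto
  then show ?thesis unfolding eventually_sequentially by blast
qed

section \<open>Compactness of the horocompactification\<close>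

lemma rho_triangle:
  assumes "fin_gen S" "fin_gen S'" "c > 0"
  shows "rho S S' c x z \<le> rho S S' c x y + rho S S' c y z"
proof -
  have "real (wdist S' (snd x) (snd z)) \<le> real (wdist S' (snd x) (snd y)) + real (wdist S' (snd y) (snd z))"
    using wdist_triangle[OF assms(2)] by (simp flip: of_nat_add)
  then have "real (wdist S' (snd x) (snd z)) / c
      \<le> real (wdist S' (snd x) (snd y)) / c + real (wdist S' (snd y) (snd z)) / c"
    using assms(3) by (simp flip: add_divide_distrib add: divide_right_mono)
  moreover have "real (wdist S (fst x) (fst z)) \<le> real (wdist S (fst x) (fst y)) + real (wdist S (fst y) (fst z))"
    using wdist_triangle[OF assms(1)] by (simp flip: of_nat_add)
  ultimately show ?thesis unfolding rho_def by linarith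
qed

lemma rho_commute: "fin_gen S \<Longrightarrow> fin_gen S' \<Longrightarrow> rho S S' c x y = rho S S' c y x"
  unfolding rho_def by (metis wdist_commute)

lemma abs_horo_le:
  assumes "fin_gen S" "fin_gen S'" "c > 0"
  shows "\<bar>horo S S' c x y\<bar> \<le> rho S S' c 0 y"
  using rho_triangle[OF assms, of x y 0] rho_triangle[OF assms, of x 0 y] rho_commute[OF assms(1,2), of c y 0]
  unfolding horo_def by linarith

lemma compact_PiE_UNIV:
  assumes "\<And>i. compact (K i :: 'b::topological_space set)"
  shows "compact (Pi\<^sub>E UNIV K)"
  using assms compactin_PiE[of "\<lambda>i. euclidean" UNIV K]
  by (simp add: euclidean_product_topology)

lemma closed_PiE_UNIV:
  assumes "\<And>i. closed (K i :: 'b::topological_space set)"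
  shows "closed (Pi\<^sub>E UNIV K)"
  using assms closedin_product_topology[of "\<lambda>i. euclidean" UNIV K]
  by (simp add: euclidean_product_topology)

lemma compact_horo_closure:
  assumes "fin_gen S" "fin_gen S'" "c > 0"
  shows "compact (horo_closure S S' c)"
proof -
  define P where "P = Pi\<^sub>E UNIV (\<lambda>y. {- rho S S' c 0 y .. rho S S' c 0 y})"
  have "range (horo S S' c) \<subseteq> P"
    using abs_horo_le[OF assms] unfolding P_def by (auto simp: abs_le_iff minus_le_iff)
  then have "horo_closure S S' c \<subseteq> P"
    unfolding horo_closure_def P_def by (rule closure_minimal[OF _ closed_PiE_UNIV]) simp
  moreover have "compact P" unfolding P_def by (rule compact_PiE_UNIV) simp
  ultimately show ?thesis
    unfolding horo_closure_def by (metis closed_closure compact_Int_closed inf.absorb2)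
qed

section \<open>Cylinder test functions on the space of pointed sets\<close>

lemma compact_fun_true_at: "compact {b :: 'c \<Rightarrow> bool. b y0}"
proof -
  have "{b :: 'c \<Rightarrow> bool. b y0} = Pi\<^sub>E UNIV (\<lambda>y. if y = y0 then {True} else UNIV)"
    by (auto simp: PiE_def Pi_def extensional_def)
  moreover have "compact (Pi\<^sub>E UNIV (\<lambda>y. if y = y0 then {True} else (UNIV :: bool set)))"
    by (rule compact_PiE_UNIV) (auto intro: finite_imp_compact)
  ultimately show ?thesis by simp
qed

lemma tendsto_fun_componentwise:
  fixes f :: "'x \<Rightarrow> 'i \<Rightarrow> 'b::topological_space"
  assumes "\<And>i. ((\<lambda>x. f x i) \<longlongrightarrow> l i) F"
  shows "(f \<longlongrightarrow> l) F"
proof -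
  have "limitin (product_topology (\<lambda>i. euclidean) UNIV) f l F"
    using assms by (simp add: limitin_componentwise)
  then show ?thesis by (simp add: euclidean_product_topology)
qed

lemma eventually_tendsto_fun_true:
  fixes b :: "'x \<Rightarrow> 'c \<Rightarrow> bool"
  assumes "(b \<longlongrightarrow> b0) F" "b0 y"
  shows "\<forall>\<^sub>F x in F. b x y"
proof -
  have "((\<lambda>x. b x y) \<longlongrightarrow> b0 y) F"
    by (rule continuous_on_tendsto_compose[OF continuous_on_product_coordinates assms(1)]) simp_all
  moreover have "open {True}"
  proof -
    have "{True} = {False<..}" by auto
    then show ?thesis by (metis open_greaterThan)
  qed
  ultimately show ?thesis using assms(2) topological_tendstoD by fastforce
qed

text \<open>Continuous because \<open>bool\<close> is discrete; compactly supported because the \<open>bool\<close> factor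
forces the set component to meet \<open>B\<close>.\<close>
definition cylinder_bump ::
    "'c set \<Rightarrow> ('c \<Rightarrow> bool) \<Rightarrow> ('c \<Rightarrow> real) \<Rightarrow> real \<Rightarrow> ('c \<Rightarrow> bool) \<times> ('c \<Rightarrow> real) \<Rightarrow> real" where
  "cylinder_bump B b0 t0 e q =
     (\<Prod>y\<in>B. if fst q y = b0 y then 1 else 0) * (\<Prod>y\<in>B. max 0 (1 - \<bar>snd q y - t0 y\<bar> / e))"

lemma cylinder_bump_center: "cylinder_bump B b0 t0 e (b0, t0) = 1"
  unfolding cylinder_bump_def by simp

lemma cylinder_bump_nonneg: "cylinder_bump B b0 t0 e q \<ge> 0"
  unfolding cylinder_bump_def by (intro mult_nonneg_nonneg prod_nonneg) auto

lemma cylinder_bump_nonzeroD: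
  assumes "cylinder_bump B b0 t0 e q \<noteq> 0" "finite B" "e > 0" "y \<in> B"
  shows "fst q y = b0 y" "\<bar>snd q y - t0 y\<bar> < e"
proof -
  from assms(1) have "(\<Prod>y\<in>B. if fst q y = b0 y then 1 else (0::real)) \<noteq> 0"
    and tent: "(\<Prod>y\<in>B. max 0 (1 - \<bar>snd q y - t0 y\<bar> / e)) \<noteq> 0"
    unfolding cylinder_bump_def by auto
  with assms(2,4) show "fst q y = b0 y" by (auto split: if_splits)
  from tent assms(2,4) have "max 0 (1 - \<bar>snd q y - t0 y\<bar> / e) \<noteq> 0" by auto
  then have "\<bar>snd q y - t0 y\<bar> / e < 1" by (metis diff_gt_0_iff_gt linorder_not_le max.absorb1)
  then show "\<bar>snd q y - t0 y\<bar> < e" using assms(3) by (simp add: divide_less_eq)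
qed

lemma continuous_cylinder_bump:
  fixes B :: "'c set"
  assumes "e > 0"
  shows "continuous_on UNIV (cylinder_bump B b0 t0 e)"
proof -
  have coord: "continuous_on UNIV (\<lambda>q::('c \<Rightarrow> bool) \<times> ('c \<Rightarrow> real). fst q y)"
    "continuous_on UNIV (\<lambda>q::('c \<Rightarrow> bool) \<times> ('c \<Rightarrow> real). snd q y)" for y :: 'c
    by (rule continuous_on_product_then_coordinatewise, intro continuous_intros)+
  have "continuous_on UNIV
      ((\<lambda>v. if v = b0 y then 1 else (0::real)) \<circ> (\<lambda>q::('c \<Rightarrow> bool) \<times> ('c \<Rightarrow> real). fst q y))"
    for y :: 'c by (rule continuous_on_compose[OF coord(1)]) simp
  then have indicator: "continuous_on UNIV
      (\<lambda>q::('c \<Rightarrow> bool) \<times> ('c \<Rightarrow> real). if fst q y = b0 y then 1 else (0::real))" for y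
    by (simp add: o_def)
  show ?thesis
    unfolding cylinder_bump_def using assms by (intro continuous_intros indicator coord(2)) auto
qed

lemma cylinder_bump_Cc:
  assumes "finite B" "y0 \<in> B" "b0 y0" "compact H" "e > 0"
  shows "cylinder_bump B b0 t0 e \<in> Cc {(b, \<theta>). (\<exists>y. b y) \<and> \<theta> \<in> H}"
proof -
  let ?K = "{b. b y0} \<times> H"
  have "\<forall>q\<in>{(b, \<theta>). (\<exists>y. b y) \<and> \<theta> \<in> H} - ?K. cylinder_bump B b0 t0 e q = 0"
  proof
    fix q assume "q \<in> {(b, \<theta>). (\<exists>y. b y) \<and> \<theta> \<in> H} - ?K"
    then have "\<not> fst q y0" by auto
    then show "cylinder_bump B b0 t0 e q = 0"
      using assms(1-3) unfolding cylinder_bump_def by auto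
  qed
  moreover have "compact ?K" by (intro compact_Times compact_fun_true_at assms)
  ultimately show ?thesis
    unfolding Cc_def using continuous_on_subset[OF continuous_cylinder_bump[OF assms(5)]] by blast
qed

lemma tendsto_of_cylinder_bump_nonzero:
  assumes nonzero: "\<And>k. cylinder_bump (B k) b0 t0 (e k) (Q k) \<noteq> 0"
    and "\<And>k. finite (B k)" "\<And>k. e k > 0" "e \<longlonglongrightarrow> 0"
    and exhaust: "\<And>y. \<forall>\<^sub>F k in sequentially. y \<in> B k"
  shows "Q \<longlonglongrightarrow> (b0, t0)"
proof -
  note close = cylinder_bump_nonzeroD[OF nonzero assms(2,3)]
  have "(\<lambda>k. fst (Q k)) \<longlonglongrightarrow> b0"
  proof (rule tendsto_fun_componentwise)
    show "(\<lambda>k. fst (Q k) y) \<longlonglongrightarrow> b0 y" for y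
      by (rule tendsto_eventually, rule eventually_mono[OF exhaust[of y]]) (rule close)
  qed
  moreover have "(\<lambda>k. snd (Q k)) \<longlonglongrightarrow> t0"
  proof (rule tendsto_fun_componentwise)
    fix y
    have "\<forall>\<^sub>F k in sequentially. norm (snd (Q k) y - t0 y) \<le> e k"
      by (rule eventually_mono[OF exhaust[of y]]) (use close in \<open>simp add: less_imp_le\<close>)
    then have "(\<lambda>k. snd (Q k) y - t0 y) \<longlonglongrightarrow> 0" by (rule Lim_null_comparison[OF _ assms(4)])
    then show "(\<lambda>k. snd (Q k) y) \<longlonglongrightarrow> t0 y" by (rule LIM_zero_cancel)
  qed
  ultimately have "(\<lambda>k. (fst (Q k), snd (Q k))) \<longlonglongrightarrow> (b0, t0)" by (rule tendsto_Pair)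
  then show ?thesis by simp
qed

section \<open>Points charged by a vague limit\<close>

lemma mint_ge_member:
  assumes "finite {q. m q \<noteq> 0 \<and> \<phi> q \<noteq> 0}" "\<And>q. \<phi> q \<ge> 0" "m p \<noteq> 0" "\<phi> p \<noteq> 0"
  shows "real (m p) * \<phi> p \<le> mint m \<phi>"
  unfolding mint_def
  by (rule member_le_sum[where f = "\<lambda>q. real (m q) * \<phi> q"]) (use assms in auto)

lemma mint_nonzero_imp_support: "mint m \<phi> \<noteq> 0 \<Longrightarrow> \<exists>q. m q \<noteq> 0 \<and> \<phi> q \<noteq> 0"
  unfolding mint_def by (metis (mono_tags, lifting) Collect_empty_eq sum.empty)

lemma vague_conv_eventually_meets:
  assumes "vague_conv X ms m" "\<phi> \<in> Cc X" "\<And>q. \<phi> q \<ge> 0"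
    and "finite {q. m q \<noteq> 0 \<and> \<phi> q \<noteq> 0}" "m p \<noteq> 0" "\<phi> p > 0"
  shows "\<forall>\<^sub>F n in sequentially. \<exists>q. ms n q \<noteq> 0 \<and> \<phi> q \<noteq> 0"
proof -
  have "0 < real (m p) * \<phi> p" using assms(5,6) by simp
  also have "\<dots> \<le> mint m \<phi>" using assms(3-6) by (intro mint_ge_member) auto
  finally have "mint m \<phi> > 0" .
  moreover have "(\<lambda>n. mint (ms n) \<phi>) \<longlonglongrightarrow> mint m \<phi>"
    using assms(1,2) unfolding vague_conv_def by blast
  ultimately have "\<forall>\<^sub>F n in sequentially. mint (ms n) \<phi> > 0" by (simp add: order_tendstoD(1))
  then show ?thesis by (rule eventually_mono) (rule mint_nonzero_imp_support, simp)
qed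

lemma eventually_sequentially_diagonal:
  assumes "\<And>k. \<forall>\<^sub>F n in sequentially. P k n"
  shows "\<exists>N. \<forall>k. k \<le> N k \<and> P k (N k)"
proof -
  obtain N0 where "\<And>k n. n \<ge> N0 k \<Longrightarrow> P k n"
    using assms choice[of "\<lambda>k N. \<forall>n\<ge>N. P k n"] unfolding eventually_sequentially by metis
  then show ?thesis by (intro exI[of _ "\<lambda>k. N0 k + k"]) simp
qed

lemma vague_conv_support_approx:
  fixes ms :: "nat \<Rightarrow> ('a, 'b) cpt \<Rightarrow> nat" and H :: "('a \<times> 'b \<Rightarrow> real) set"
    and B :: "nat \<Rightarrow> ('a \<times> 'b) set"
  defines "X \<equiv> {(b, \<theta>). (\<exists>y. b y) \<and> \<theta> \<in> H}"
  assumes "compact H" "vague_conv X ms m" "discrete_set X m" "m p \<noteq> 0"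
    and "\<And>k. finite (B k)" "\<And>y. \<forall>\<^sub>F k in sequentially. y \<in> B k"
    and good: "\<And>k. \<forall>\<^sub>F n in sequentially. good k n"
  shows "\<exists>N Q. (\<forall>k. k \<le> N k \<and> good k (N k) \<and> ms (N k) (Q k) \<noteq> 0) \<and> Q \<longlonglongrightarrow> p"
proof -
  obtain b0 t0 where p: "p = (b0, t0)" by fastforce
  have "p \<in> X" using assms(4,5) unfolding discrete_set_def by blast
  then obtain y0 where "b0 y0" unfolding X_def p by auto
  define W where "W k = insert y0 (B k)" for k
  define e where "e k = inverse (real (Suc k))" for k
  define \<phi> where "\<phi> k = cylinder_bump (W k) b0 t0 (e k)" for k
  have W: "finite (W k)" "y0 \<in> W k" for k unfolding W_def using assms(6) by auto
  have e: "e k > 0" for k unfolding e_def by simp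
  have "{q. m q \<noteq> 0 \<and> \<phi> k q \<noteq> 0} \<subseteq> {q. m q \<noteq> 0 \<and> fst q y0}" for k
    using cylinder_bump_nonzeroD(1)[OF _ W(1) e W(2)] \<open>b0 y0\<close> unfolding \<phi>_def by fastforce
  then have finite_support: "finite {q. m q \<noteq> 0 \<and> \<phi> k q \<noteq> 0}" for k
    using assms(4) unfolding discrete_set_def by (blast intro: finite_subset)
  have "\<phi> k \<in> Cc X" for k
    unfolding \<phi>_def X_def using W \<open>b0 y0\<close> assms(2) e by (rule cylinder_bump_Cc)
  then have "\<forall>\<^sub>F n in sequentially. \<exists>q. ms n q \<noteq> 0 \<and> \<phi> k q \<noteq> 0" for k
    by (rule vague_conv_eventually_meets[OF assms(3) _ _ finite_support assms(5)])
      (simp_all add: \<phi>_def p cylinder_bump_nonneg cylinder_bump_center)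
  then obtain N where "\<forall>k. k \<le> N k \<and> good k (N k) \<and> (\<exists>q. ms (N k) q \<noteq> 0 \<and> \<phi> k q \<noteq> 0)"
    using eventually_sequentially_diagonal[of "\<lambda>k n. good k n \<and> (\<exists>q. ms n q \<noteq> 0 \<and> \<phi> k q \<noteq> 0)"]
      good eventually_conj by blast
  then obtain Q where N: "\<forall>k. k \<le> N k \<and> good k (N k) \<and> ms (N k) (Q k) \<noteq> 0"
    and "\<And>k. \<phi> k (Q k) \<noteq> 0" by metis
  moreover have "e \<longlonglongrightarrow> 0" unfolding e_def by (rule LIMSEQ_inverse_real_of_nat)
  moreover have "\<forall>\<^sub>F k in sequentially. y \<in> W k" for y
    using assms(7) unfolding W_def by (auto elim: eventually_mono)
  ultimately have "Q \<longlonglongrightarrow> p"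
    unfolding p \<phi>_def using tendsto_of_cylinder_bump_nonzero W(1) e by blast
  with N show ?thesis by blast
qed

section \<open>Perturbed diamonds and the sets \<open>A\<^sub>n\<^sub>,\<^sub>T\<close>\<close>

lemma diamond_center_bound:
  assumes "fin_gen S" "fin_gen S'" "mono f" "y \<in> diamond S S' f r n x"
  shows "wdist S 0 (fst x) \<le> wdist S 0 (fst y) + r n"
    and "wdist S' 0 (snd x) \<le> wdist S' 0 (snd y) + f (r n)"
proof -
  obtain t where t: "t \<le> r n" "wdist S (fst x) (fst y) = r n - t" "wdist S' (snd x) (snd y) \<le> f t"
    using assms(4) unfolding diamond_def by auto
  have "f t \<le> f (r n)" using assms(3) t(1) by (rule monoD)
  then have "wdist S (fst y) (fst x) \<le> r n" "wdist S' (snd y) (snd x) \<le> f (r n)"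
    using t wdist_commute[OF assms(1), of "fst y"] wdist_commute[OF assms(2), of "snd y"] by simp_all
  then show "wdist S 0 (fst x) \<le> wdist S 0 (fst y) + r n"
    and "wdist S' 0 (snd x) \<le> wdist S' 0 (snd y) + f (r n)"
    using wdist_triangle[OF assms(1), of 0 "fst x" "fst y"] wdist_triangle[OF assms(2), of 0 "snd x" "snd y"]
    by simp_all
qed

lemma diamond_center_far:
  assumes "fin_gen S" "fin_gen S'" "mono f" "y \<in> diamond S S' f r n x"
    and "pdiamond S S' c f r n x \<notin> A_set S S' c f r n T"
    and "real (wdist S 0 (fst y)) < T" "real (wdist S' 0 (snd y)) < T"
  shows "T \<le> real (wdist S 0 (fst x))" "T \<le> real (wdist S' 0 (snd x))"
  using assms(5-7) diamond_center_bound[OF assms(1-4)] unfolding A_set_def by force+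

lemma finite_A_set:
  assumes "fin_gen S" "fin_gen S'"
  shows "finite (A_set S S' c f r n T)"
proof -
  define R where "R = r n + f (r n) + nat \<lceil>\<bar>T\<bar>\<rceil>"
  have "real (r n) + T \<le> R" "T \<le> R" "real (f (r n)) + T \<le> R"
    unfolding R_def by linarith+
  then have "{x. (real (wdist S 0 (fst x)) < real (r n) + T \<and> real (wdist S' 0 (snd x)) < T) \<or>
       (real (wdist S' 0 (snd x)) < real (f (r n)) + T \<and> real (wdist S 0 (fst x)) < T)}
     \<subseteq> {y. wdist S 0 y \<le> R} \<times> {y'. wdist S' 0 y' \<le> R}"
    by auto
  then have "A_set S S' c f r n T \<subseteq> pdiamond S S' c f r n ` ({y. wdist S 0 y \<le> R} \<times> {y'. wdist S' 0 y' \<le> R})"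
    unfolding A_set_def by (rule image_mono)
  then show ?thesis
    by (rule finite_subset) (intro finite_imageI finite_wdist_ball_prod assms)
qed

lemma eventually_vanish_of_sum_tendsto_0:
  fixes g :: "nat \<Rightarrow> 'c \<Rightarrow> nat"
  assumes "\<And>n. finite (A n)" "(\<lambda>n. real (\<Sum>q\<in>A n. g n q)) \<longlonglongrightarrow> 0"
  shows "\<forall>\<^sub>F n in sequentially. \<forall>q\<in>A n. g n q = 0"
proof -
  have "\<forall>\<^sub>F n in sequentially. real (\<Sum>q\<in>A n. g n q) < 1"
    using assms(2) by (rule order_tendstoD) simp
  then show ?thesis
  proof (rule eventually_mono)
    fix n assume "real (\<Sum>q\<in>A n. g n q) < 1"
    then have "(\<Sum>q\<in>A n. g n q) = 0" by linarith
    then show "\<forall>q\<in>A n. g n q = 0" using assms(1) by simp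
  qed
qed

lemma eventually_vanish_on_A_set:
  assumes "fin_gen S" "fin_gen S'" "strict_mono \<sigma>"
    and "(\<lambda>n. real (\<Sum>p\<in>A_set S S' c f r n T. Cs n p)) \<longlonglongrightarrow> 0"
  shows "\<forall>\<^sub>F n in sequentially. \<forall>q\<in>A_set S S' c f r (\<sigma> n) T. Cs (\<sigma> n) q = 0"
proof -
  have "(\<lambda>n. real (\<Sum>q\<in>A_set S S' c f r (\<sigma> n) T. Cs (\<sigma> n) q)) \<longlonglongrightarrow> 0"
    using LIMSEQ_subseq_LIMSEQ[OF assms(4,3)] by (simp add: o_def)
  with finite_A_set[OF assms(1,2)] show ?thesis by (rule eventually_vanish_of_sum_tendsto_0)
qed

lemma diamond_centers_tendsto_infinity:
  assumes "fin_gen S" "fin_gen S'" "mono f"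
    and lim: "(\<lambda>k. pdiamond S S' c f r (nk k) (x k)) \<longlonglongrightarrow> p" and "fst p z"
    and avoid: "\<And>k. pdiamond S S' c f r (nk k) (x k) \<notin> A_set S S' c f r (nk k) (real k + R)"
    and "real (wdist S 0 (fst z)) < R" "real (wdist S' 0 (snd z)) < R"
  shows "filterlim (\<lambda>k. real (wdist S (fst (x k)) 0)) at_top sequentially"
    and "filterlim (\<lambda>k. real (wdist S' (snd (x k)) 0)) at_top sequentially"
proof -
  have "\<forall>\<^sub>F k in sequentially. real k \<le> real (wdist S (fst (x k)) 0) \<and> real k \<le> real (wdist S' (snd (x k)) 0)"
  proof (rule eventually_mono[OF eventually_tendsto_fun_true[OF tendsto_fst[OF lim] \<open>fst p z\<close>]])
    fix k assume "fst (pdiamond S S' c f r (nk k) (x k)) z"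
    then have "z \<in> diamond S S' f r (nk k) (x k)" by (simp add: pdiamond_def)
    moreover have "real (wdist S 0 (fst z)) < real k + R" "real (wdist S' 0 (snd z)) < real k + R"
      using assms(7,8) by linarith+
    ultimately have "real k + R \<le> real (wdist S 0 (fst (x k)))" "real k + R \<le> real (wdist S' 0 (snd (x k)))"
      by (rule diamond_center_far[OF assms(1-3) _ avoid])+
    moreover have "0 < R" using assms(7) by linarith
    ultimately show "real k \<le> real (wdist S (fst (x k)) 0) \<and> real k \<le> real (wdist S' (snd (x k)) 0)"
      using wdist_commute[OF assms(1), of "fst (x k)"] wdist_commute[OF assms(2), of "snd (x k)"] by simp
  qed
  then show "filterlim (\<lambda>k. real (wdist S (fst (x k)) 0)) at_top sequentially"
    and "filterlim (\<lambda>k. real (wdist S' (snd (x k)) 0)) at_top sequentially"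
    by (auto intro: filterlim_at_top_mono[OF filterlim_real_sequentially eventually_mono])
qed

lemma typeII_horoball_of_avoiding_diamonds:
  assumes "fin_gen S" "fin_gen S'" "mono f" "p \<in> cspace S S' c" "fst p z"
    and "real (wdist S 0 (fst z)) < R" "real (wdist S' 0 (snd z)) < R"
    and "filterlim nk at_top sequentially"
    and "(\<lambda>k. pdiamond S S' c f r (nk k) (x k)) \<longlonglongrightarrow> p"
    and "\<And>k. pdiamond S S' c f r (nk k) (x k) \<notin> A_set S S' c f r (nk k) (real k + R)"
  shows "typeII_horoball S S' c f r p"
  using assms diamond_centers_tendsto_infinity[OF assms(1-3,9,5,10,6,7)]
  unfolding typeII_horoball_def by blast

theorem lemma3p5:
  fixes S :: "'a::group_add set" and S' :: "'b::group_add set"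
    and c :: real and f :: "nat \<Rightarrow> nat" and r :: "nat \<Rightarrow> nat"
    and Cs :: "nat \<Rightarrow> ('a, 'b) cpt \<Rightarrow> nat"
  assumes "fin_gen S" and "fin_gen S'"
    and "growth S > 1" and "growth S' > 1"
    and "c = ln (growth S) / ln (growth S')"
    and "mono f" and "f 0 = 0" and "strict_mono r"
    and "\<exists>lo hi. 0 < lo \<and> (\<forall>n. lo \<le> real (ball_vol S' (f (r n))) / real (ball_vol S (r n))
                              \<and> real (ball_vol S' (f (r n))) / real (ball_vol S (r n)) \<le> hi)"
    and "\<forall>m. \<exists>N. \<forall>n\<ge>N. \<bar>real (f (n + m)) - real (f n) - c * real m\<bar> \<le> 1"
    and "\<forall>n. discrete_set (cspace S S' c) (Cs n)"
    and "\<forall>n p. Cs n p \<noteq> 0 \<longrightarrow> (\<exists>x. p = pdiamond S S' c f r n x)"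
    and "\<forall>T::real. (\<lambda>n. real (\<Sum>p\<in>A_set S S' c f r n T. Cs n p)) \<longlonglongrightarrow> 0"
  shows "\<forall>\<sigma> m. strict_mono \<sigma> \<and> discrete_set (cspace S S' c) m
            \<and> vague_conv (cspace S S' c) (Cs \<circ> \<sigma>) m
          \<longrightarrow> (\<forall>p. m p \<noteq> 0 \<longrightarrow> typeII_horoball S S' c f r p)"
proof (intro allI impI)
  fix \<sigma> m p
  assume lim: "strict_mono \<sigma> \<and> discrete_set (cspace S S' c) m \<and> vague_conv (cspace S S' c) (Cs \<circ> \<sigma>) m"
    and "m p \<noteq> 0"
  then have "p \<in> cspace S S' c" unfolding discrete_set_def by blast
  then obtain y0 where y0: "fst p y0" unfolding cspace_def by auto
  have "c > 0" using assms(3-5) by simp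
  define R where "R = real (wdist S 0 (fst y0) + wdist S' 0 (snd y0) + 1)"
  define avoids_A where
    "avoids_A k n \<longleftrightarrow> (\<forall>q\<in>A_set S S' c f r (\<sigma> n) (real k + R). Cs (\<sigma> n) q = 0)" for k n
  have "\<exists>N Q. (\<forall>k. k \<le> N k \<and> avoids_A k (N k) \<and> (Cs \<circ> \<sigma>) (N k) (Q k) \<noteq> 0) \<and> Q \<longlonglongrightarrow> p"
    by (rule vague_conv_support_approx[where ms = "Cs \<circ> \<sigma>" and good = avoids_A
          and B = "\<lambda>k. {y. wdist S 0 y \<le> k} \<times> {y'. wdist S' 0 y' \<le> k}",
          OF compact_horo_closure[OF assms(1,2) \<open>c > 0\<close>]])
      (use lim \<open>m p \<noteq> 0\<close> finite_wdist_ball_prod[OF assms(1,2)] eventually_in_wdist_ball_prod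
         eventually_vanish_on_A_set[OF assms(1,2) _ spec[OF assms(13)]]
       in \<open>simp_all add: cspace_def avoids_A_def\<close>)
  then obtain N Q where Q: "Q \<longlonglongrightarrow> p" and N: "\<And>k. k \<le> N k" "\<And>k. avoids_A k (N k)"
    "\<And>k. Cs (\<sigma> (N k)) (Q k) \<noteq> 0"
    by auto
  then have "\<forall>k. \<exists>x. Q k = pdiamond S S' c f r ((\<sigma> \<circ> N) k) x" using assms(12) unfolding o_def by blast
  from choice[OF this] obtain x where x: "Q = (\<lambda>k. pdiamond S S' c f r ((\<sigma> \<circ> N) k) (x k))"
    by auto
  have "real (wdist S 0 (fst y0)) < R" "real (wdist S' 0 (snd y0)) < R"
    unfolding R_def by simp_all
  moreover have "filterlim (\<sigma> \<circ> N) at_top sequentially"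
    using order_trans[OF N(1) seq_suble[of \<sigma>]] lim
    by (intro filterlim_at_top_mono[OF filterlim_ident]) simp
  moreover have "(\<lambda>k. pdiamond S S' c f r ((\<sigma> \<circ> N) k) (x k)) \<longlonglongrightarrow> p"
    using Q unfolding x .
  moreover have "pdiamond S S' c f r ((\<sigma> \<circ> N) k) (x k) \<notin> A_set S S' c f r ((\<sigma> \<circ> N) k) (real k + R)" for k
    using N(2,3)[of k] unfolding avoids_A_def x by auto
  ultimately show "typeII_horoball S S' c f r p"
    by (rule typeII_horoball_of_avoiding_diamonds[OF assms(1,2,6) \<open>p \<in> cspace S S' c\<close> y0])
qed

end
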